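(* Under Assumptions 1, 2, 3 and 4 (stated in the context), for every node $i\in[n]$, $$\mu_i:=\liminf_{t\to\infty}-\frac1t\log\big(1-q_i^{(t)}(\theta_M)\big)=\min_{k\in[M-1]}K(\theta_M,\theta_k)\quad\mathsf P\text{-a.s.}$$
   Context: There are $n$ nodes and a finite set of hypotheses $\Theta=\{\theta_1,\dots,\theta_M\}$. Node $i$ has an observation space $\mathcal{X}_i$; $\mathcal{X}=\mathcal{X}_1\times\cdots\times\mathcal{X}_n$. For each $k\in[M]$, $f(\cdot;\theta_k)$ is a joint probability distribution on $\mathcal{X}$ with $i$-th marginal $f_i(\cdot;\theta_k)$. The true hypothesis is $\theta_M$: the observation profiles $X^{(t)}=(X_1^{(t)},\dots,X_n^{(t)})$, $t=1,2,\dots$, are i.i.d. over $t$ with law $f(\cdot;\theta_M)$ (components may be dependent). $\mathsf{P}$ is the induced probability measure; $D(\cdot\|\cdot)$ is KL divergence. $W$ is an $n\times n$ row-stochastic nonnegative matrix with, for $j\ne i$, $W_{ij}>0$ iff there is a directed edge from $j$ to $i$ in the communication graph. Learning rule: initial private beliefs $\mathbf q_i^{(0)}$ (probability vectors on $\Theta$); for $t\ge1$, $k\in[M]$: $b_i^{(t)}(\theta_k)=\frac{f_i(X_i^{(t)};\theta_k)q_i^{(t-1)}(\theta_k)}{\sum_{a}f_i(X_i^{(t)};\theta_a)q_i^{(t-1)}(\theta_a)}$ and $q_i^{(t)}(\theta_k)=\frac{\exp(\sum_j W_{ij}\log b_j^{(t)}(\theta_k))}{\sum_a\exp(\sum_j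 W_{ij}\log b_j^{(t)}(\theta_a))}$. Assumption 1: for every $k\ne j$ there is a node $i$ with $D(f_i(\cdot;\theta_k)\|f_i(\cdot;\theta_j))>0$. Assumption 2: the communication graph is strongly connected ($W$ irreducible). Assumption 3: $q_i^{(0)}(\theta_k)>0$ for all $i,k$. Assumption 4: there is $L>0$ with $\max_{i}\max_{j,k\in[M]}\sup_{x\in\mathcal X_i}\big|\log\frac{f_i(x;\theta_j)}{f_i(x;\theta_k)}\big|\le L$. $\mathbf v$ is the stationary distribution of $W$ and $K(\theta_M,\theta_k)=\sum_{i=1}^n v_iD(f_i(\cdot;\theta_M)\|f_i(\cdot;\theta_k))$. *)

theory Defs
  imports "HOL-Probability.Probability"
begin

text \<open>Nodes are 1..n, hypotheses are 1..M (the true one is M).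
  W i j is the weight node i puts on node j; f i k x is the likelihood
  (density w.r.t. a reference measure) of observation x at node i under hypothesis k.
  obs t j is the observation of node j at time t (t \<ge> 1).\<close>

fun belief :: "(nat \<Rightarrow> nat \<Rightarrow> real) \<Rightarrow> nat \<Rightarrow> nat \<Rightarrow> (nat \<Rightarrow> nat \<Rightarrow> 'x \<Rightarrow> real)
    \<Rightarrow> (nat \<Rightarrow> nat \<Rightarrow> real) \<Rightarrow> (nat \<Rightarrow> nat \<Rightarrow> 'x) \<Rightarrow> nat \<Rightarrow> nat \<Rightarrow> nat \<Rightarrow> real" where
  "belief W n M f q0 obs 0 i k = q0 i k"
| "belief W n M f q0 obs (Suc t) i k =
    (let b = (\<lambda>j a. f j a (obs (Suc t) j) * belief W n M f q0 obs t j a /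
                     (\<Sum>c\<in>{1..M}. f j c (obs (Suc t) j) * belief W n M f q0 obs t j c))
     in exp (\<Sum>j\<in>{1..n}. W i j * ln (b j k)) /
        (\<Sum>a\<in>{1..M}. exp (\<Sum>j\<in>{1..n}. W i j * ln (b j a))))"


definition comm_edges :: "(nat \<Rightarrow> nat \<Rightarrow> real) \<Rightarrow> nat \<Rightarrow> (nat \<times> nat) set" where
  "comm_edges W n = {(j, i). i \<in> {1..n} \<and> j \<in> {1..n} \<and> i \<noteq> j \<and> W i j > 0}"

definition strongly_connected :: "(nat \<Rightarrow> nat \<Rightarrow> real) \<Rightarrow> nat \<Rightarrow> bool" where
  "strongly_connected W n \<longleftrightarrow> (\<forall>i\<in>{1..n}. \<forall>j\<in>{1..n}. (i, j) \<in> (comm_edges W n)\<^sup>*)"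

text \<open>KL divergence D(f_i(.;theta_a) || f_i(.;theta_b)) in nats, with densities w.r.t. lam i.\<close>
definition KLnode :: "(nat \<Rightarrow> 'x measure) \<Rightarrow> (nat \<Rightarrow> nat \<Rightarrow> 'x \<Rightarrow> real) \<Rightarrow> nat \<Rightarrow> nat \<Rightarrow> nat \<Rightarrow> real" where
  "KLnode lam f i a b =
     KL_divergence (exp 1) (density (lam i) (\<lambda>x. ennreal (f i b x))) (density (lam i) (\<lambda>x. ennreal (f i a x)))"

end

theory Submission
  imports Defs
begin

(*
  The log-ratios \<phi>\<^sub>k(t) = ln (q\<^sub>i(\<theta>\<^sub>k) / q\<^sub>i(\<theta>\<^sub>M)) satisfy the linear recursion
  \<phi>\<^sub>k(t+1) = W (\<phi>\<^sub>k(t) + \<lambda>\<^sub>k(t+1)) driven by the local log-likelihood ratios \<lambda>\<^sub>k, hence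
  \<phi>\<^sub>k(t) = W^t \<phi>\<^sub>k(0) + \<Sum>s\<le>t. W^(t+1-s) \<lambda>\<^sub>k(s). Centring \<lambda>\<^sub>k at its mean splits the sum into
  a drift, a Cesaro average of powers of W applied to the vector of means, which tends to
  -K(\<theta>\<^sub>M, \<theta>\<^sub>k) because v is stationary and W is irreducible (no aperiodicity is needed:
  the sum of the first N powers of W is already positive), and a fluctuation, a weighted sum
  of bounded independent centred variables, which is o(t) almost surely by Hoeffding's
  inequality and Borel-Cantelli. Finally 1 - q\<^sub>i(\<theta>\<^sub>M) = q\<^sub>i(\<theta>\<^sub>M) \<Sum>k<M. exp \<phi>\<^sub>k, whose
  exponential rate is the slowest of the rates K(\<theta>\<^sub>M, \<theta>\<^sub>k).
*)

section \<open>Powers of a row-stochastic matrix\<close>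

fun mat_pow :: "(nat \<Rightarrow> nat \<Rightarrow> real) \<Rightarrow> nat \<Rightarrow> nat \<Rightarrow> nat \<Rightarrow> nat \<Rightarrow> real" where
  "mat_pow W n 0 i j = (if i = j then 1 else 0)"
| "mat_pow W n (Suc m) i j = (\<Sum>l\<in>{1..n}. W i l * mat_pow W n m l j)"

lemma mat_pow_0_mult_vec:
  "l \<in> {1..n} \<Longrightarrow> (\<Sum>j\<in>{1..n}. mat_pow W n 0 l j * x j) = x l"
  by (simp add: mult_delta_left sum.delta)

lemma mat_pow_Suc_mult_vec:
  "(\<Sum>j\<in>{1..n}. mat_pow W n (Suc m) i j * x j) =
     (\<Sum>l\<in>{1..n}. W i l * (\<Sum>j\<in>{1..n}. mat_pow W n m l j * x j))"
  by (simp add: sum_distrib_left sum_distrib_right mult.assoc) (rule sum.swap)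

lemma mat_pow_add:
  "i \<in> {1..n} \<Longrightarrow> mat_pow W n (p + q) i j = (\<Sum>l\<in>{1..n}. mat_pow W n p i l * mat_pow W n q l j)"
proof (induction p arbitrary: i)
  case 0
  then show ?case by (simp add: mult_delta_left sum.delta)
next
  case (Suc p)
  have "mat_pow W n (Suc p + q) i j =
          (\<Sum>l\<in>{1..n}. W i l * (\<Sum>r\<in>{1..n}. mat_pow W n p l r * mat_pow W n q r j))"
    using Suc.IH by (auto intro!: sum.cong)
  then show ?case
    by (simp add: sum_distrib_left sum_distrib_right mult.assoc) (rule sum.swap)
qed

lemma mat_pow_add_mult_vec:
  "i \<in> {1..n} \<Longrightarrow> (\<Sum>l\<in>{1..n}. mat_pow W n p i l * (\<Sum>j\<in>{1..n}. mat_pow W n m l j * x j)) =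
     (\<Sum>j\<in>{1..n}. mat_pow W n (p + m) i j * x j)"
  by (simp add: mat_pow_add sum_distrib_left sum_distrib_right mult.assoc) (rule sum.swap)

lemma mat_pow_Suc_right:
  assumes "i \<in> {1..n}" "j \<in> {1..n}"
  shows "mat_pow W n (Suc m) i j = (\<Sum>l\<in>{1..n}. mat_pow W n m i l * W l j)"
proof -
  have "mat_pow W n 1 l j = W l j" for l
    using assms(2) by (simp add: mult_delta_right)
  then show ?thesis
    using mat_pow_add[OF assms(1), where p = m and q = 1] by simp
qed

lemma stationary_mat_pow:
  assumes stat: "\<And>j. j \<in> {1..n} \<Longrightarrow> (\<Sum>i\<in>{1..n}. v i * W i j) = v j"
  shows "j \<in> {1..n} \<Longrightarrow> (\<Sum>i\<in>{1..n}. v i * mat_pow W n m i j) = v j"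
proof (induction m arbitrary: j)
  case 0
  then show ?case by (simp add: mult_delta_right)
next
  case (Suc m)
  have "(\<Sum>i\<in>{1..n}. v i * mat_pow W n (Suc m) i j) =
          (\<Sum>l\<in>{1..n}. (\<Sum>i\<in>{1..n}. v i * mat_pow W n m i l) * W l j)"
  proof -
    have "(\<Sum>i\<in>{1..n}. v i * mat_pow W n (Suc m) i j) =
            (\<Sum>i\<in>{1..n}. \<Sum>l\<in>{1..n}. v i * mat_pow W n m i l * W l j)"
      using mat_pow_Suc_right[OF _ Suc.prems]
      by (intro sum.cong refl) (simp add: sum_distrib_left mult.assoc)
    then show ?thesis
      by (simp add: sum_distrib_right) (rule sum.swap)
  qed
  also have "\<dots> = (\<Sum>l\<in>{1..n}. v l * W l j)"
    using Suc.IH by (intro sum.cong) auto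
  also have "\<dots> = v j"
    by (rule stat[OF Suc.prems])
  finally show ?case .
qed

definition cesaro_avg :: "(nat \<Rightarrow> nat \<Rightarrow> real) \<Rightarrow> nat \<Rightarrow> (nat \<Rightarrow> real) \<Rightarrow> nat \<Rightarrow> nat \<Rightarrow> real" where
  "cesaro_avg W n \<mu> t i = (\<Sum>m\<in>{1..t}. \<Sum>j\<in>{1..n}. mat_pow W n m i j * \<mu> j) / real t"

lemma stationary_cesaro_avg:
  assumes stat: "\<And>j. j \<in> {1..n} \<Longrightarrow> (\<Sum>i\<in>{1..n}. v i * W i j) = v j" and t: "t \<ge> 1"
  shows "(\<Sum>l\<in>{1..n}. v l * cesaro_avg W n \<mu> t l) = (\<Sum>j\<in>{1..n}. v j * \<mu> j)"
proof -
  have "(\<Sum>l\<in>{1..n}. v l * (\<Sum>j\<in>{1..n}. mat_pow W n m l j * \<mu> j)) =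
          (\<Sum>j\<in>{1..n}. (\<Sum>l\<in>{1..n}. v l * mat_pow W n m l j) * \<mu> j)" for m
    by (simp add: sum_distrib_left sum_distrib_right mult_ac) (rule sum.swap)
  then have "(\<Sum>l\<in>{1..n}. v l * (\<Sum>j\<in>{1..n}. mat_pow W n m l j * \<mu> j)) = (\<Sum>j\<in>{1..n}. v j * \<mu> j)" for m
    using stationary_mat_pow[OF stat] by simp
  moreover have "(\<Sum>l\<in>{1..n}. v l * cesaro_avg W n \<mu> t l) =
      (\<Sum>m\<in>{1..t}. \<Sum>l\<in>{1..n}. v l * (\<Sum>j\<in>{1..n}. mat_pow W n m l j * \<mu> j)) / real t"
    unfolding cesaro_avg_def by (simp add: sum_distrib_left sum_divide_distrib) (rule sum.swap)
  ultimately show ?thesis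
    using t by simp
qed

lemma linear_recursion_closed_form:
  fixes x u :: "nat \<Rightarrow> nat \<Rightarrow> real"
  assumes rec: "\<And>t i. i \<in> {1..n} \<Longrightarrow> x (Suc t) i = (\<Sum>j\<in>{1..n}. W i j * (x t j + u (Suc t) j))"
  shows "i \<in> {1..n} \<Longrightarrow> x t i = (\<Sum>j\<in>{1..n}. mat_pow W n t i j * x 0 j) +
           (\<Sum>s\<in>{1..t}. \<Sum>j\<in>{1..n}. mat_pow W n (Suc t - s) i j * u s j)"
proof (induction t arbitrary: i)
  case 0
  then show ?case
    using mat_pow_0_mult_vec[of i n W "x 0"] by simp
next
  case (Suc t)
  define R where "R t l = (\<Sum>s\<in>{1..t}. \<Sum>j\<in>{1..n}. mat_pow W n (Suc t - s) l j * u s j)" for t l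
  have "x (Suc t) i =
      (\<Sum>l\<in>{1..n}. W i l * ((\<Sum>j\<in>{1..n}. mat_pow W n t l j * x 0 j) + R t l + u (Suc t) l))"
    using Suc by (simp add: rec R_def)
  also have "\<dots> = (\<Sum>l\<in>{1..n}. W i l * (\<Sum>j\<in>{1..n}. mat_pow W n t l j * x 0 j)) +
      (\<Sum>l\<in>{1..n}. W i l * R t l) + (\<Sum>l\<in>{1..n}. W i l * u (Suc t) l)"
    by (simp add: distrib_left sum.distrib)
  also have "(\<Sum>l\<in>{1..n}. W i l * (\<Sum>j\<in>{1..n}. mat_pow W n t l j * x 0 j)) =
      (\<Sum>j\<in>{1..n}. mat_pow W n (Suc t) i j * x 0 j)"
    by (rule mat_pow_Suc_mult_vec[symmetric])
  also have "(\<Sum>l\<in>{1..n}. W i l * R t l) =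
      (\<Sum>s\<in>{1..t}. \<Sum>j\<in>{1..n}. mat_pow W n (Suc (Suc t - s)) i j * u s j)"
    unfolding R_def mat_pow_Suc_mult_vec by (simp add: sum_distrib_left) (rule sum.swap)
  also have "(\<Sum>l\<in>{1..n}. W i l * u (Suc t) l) = (\<Sum>j\<in>{1..n}. mat_pow W n (Suc 0) i j * u (Suc t) j)"
    unfolding mat_pow_Suc_mult_vec by (intro sum.cong refl) (simp only: mat_pow_0_mult_vec)
  also have "(\<Sum>j\<in>{1..n}. mat_pow W n (Suc t) i j * x 0 j) +
      (\<Sum>s\<in>{1..t}. \<Sum>j\<in>{1..n}. mat_pow W n (Suc (Suc t - s)) i j * u s j) +
      (\<Sum>j\<in>{1..n}. mat_pow W n (Suc 0) i j * u (Suc t) j) =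
      (\<Sum>j\<in>{1..n}. mat_pow W n (Suc t) i j * x 0 j) +
      (\<Sum>s\<in>{1..Suc t}. \<Sum>j\<in>{1..n}. mat_pow W n (Suc (Suc t) - s) i j * u s j)"
    by (simp add: Suc_diff_le)
  finally show ?case .
qed

lemma sum_shift_diff_bound:
  fixes x :: "nat \<Rightarrow> real"
  assumes "\<And>m. \<bar>x m\<bar> \<le> C"
  shows "\<bar>\<Sum>m\<in>{1..t}. x (p + m) - x m\<bar> \<le> 2 * real p * C"
proof (induction p)
  case 0
  then show ?case by simp
next
  case (Suc p)
  have "(\<Sum>m\<in>{1..t}. x (Suc p + m) - x m) =
          (\<Sum>m\<in>{1..t}. x (p + Suc m) - x (p + m)) + (\<Sum>m\<in>{1..t}. x (p + m) - x m)"
    by (simp add: sum.distrib[symmetric])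
  also have "(\<Sum>m\<in>{1..t}. x (p + Suc m) - x (p + m)) = x (p + Suc t) - x (p + 1)"
    using sum_Suc_diff[of 1 t "\<lambda>m. x (p + m)"] by simp
  finally show ?case
    using Suc assms[of "p + Suc t"] assms[of "p + 1"] by (simp add: algebra_simps)
qed

locale row_stochastic =
  fixes W :: "nat \<Rightarrow> nat \<Rightarrow> real" and n :: nat
  assumes nonneg: "\<And>i j. i \<in> {1..n} \<Longrightarrow> j \<in> {1..n} \<Longrightarrow> W i j \<ge> 0"
    and row_sum: "\<And>i. i \<in> {1..n} \<Longrightarrow> (\<Sum>j\<in>{1..n}. W i j) = 1"
begin

lemma mat_pow_nonneg: "i \<in> {1..n} \<Longrightarrow> mat_pow W n m i j \<ge> 0"
  by (induction m arbitrary: i) (auto intro!: sum_nonneg mult_nonneg_nonneg nonneg)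

lemma mat_pow_row_sum: "i \<in> {1..n} \<Longrightarrow> (\<Sum>j\<in>{1..n}. mat_pow W n m i j) = 1"
proof (induction m arbitrary: i)
  case (Suc m)
  then show ?case
    using mat_pow_Suc_mult_vec[of W n m i "\<lambda>_. 1"] row_sum[OF Suc.prems] by simp
qed simp

lemma mat_pow_le_1: "i \<in> {1..n} \<Longrightarrow> j \<in> {1..n} \<Longrightarrow> mat_pow W n m i j \<le> 1"
  using member_le_sum[of j "{1..n}" "mat_pow W n m i"] mat_pow_nonneg mat_pow_row_sum by auto

lemma mat_pow_pos_if_path:
  assumes "(j, i) \<in> (comm_edges W n)\<^sup>*" and "j \<in> {1..n}"
  shows "\<exists>p. mat_pow W n p i j > 0"
  using assms(1)
proof (induction rule: rtrancl_induct)
  case base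
  show ?case by (intro exI[of _ 0]) simp
next
  case (step k l)
  then have kl: "k \<in> {1..n}" "l \<in> {1..n}" "W l k > 0"
    by (auto simp: comm_edges_def)
  obtain p where "mat_pow W n p k j > 0"
    using step.IH by blast
  then have "0 < W l k * mat_pow W n p k j"
    using kl by simp
  also have "\<dots> \<le> (\<Sum>r\<in>{1..n}. W l r * mat_pow W n p r j)"
    using kl by (intro member_le_sum) (auto intro!: mult_nonneg_nonneg nonneg mat_pow_nonneg)
  finally show ?case
    by (intro exI[of _ "Suc p"]) simp
qed

lemma strongly_connected_mat_pow_sum_ge:
  assumes "strongly_connected W n"
  obtains N \<beta> where "\<beta> > 0" and
    "\<And>i j. i \<in> {1..n} \<Longrightarrow> j \<in> {1..n} \<Longrightarrow> \<beta> \<le> (\<Sum>p\<le>N. mat_pow W n p i j)"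
proof -
  let ?I = "{1..n} \<times> {1..n}"
  have "\<forall>ij\<in>?I. \<exists>p. mat_pow W n p (fst ij) (snd ij) > 0"
    using assms mat_pow_pos_if_path unfolding strongly_connected_def by auto
  then obtain P where P: "\<And>ij. ij \<in> ?I \<Longrightarrow> mat_pow W n (P ij) (fst ij) (snd ij) > 0"
    by metis
  define \<beta> where "\<beta> = Min (insert 1 ((\<lambda>ij. mat_pow W n (P ij) (fst ij) (snd ij)) ` ?I))"
  show ?thesis
  proof
    show "\<beta> > 0"
      unfolding \<beta>_def using P by (subst Min_gr_iff) auto
    fix i j assume ij: "i \<in> {1..n}" "j \<in> {1..n}"
    then have "\<beta> \<le> mat_pow W n (P (i, j)) i j"
      unfolding \<beta>_def by (intro Min_le) (auto intro!: rev_image_eqI[of "(i, j)"])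
    also have "\<dots> \<le> (\<Sum>p\<le>Max (P ` ?I). mat_pow W n p i j)"
      using ij by (intro member_le_sum) (auto intro: mat_pow_nonneg)
    finally show "\<beta> \<le> (\<Sum>p\<le>Max (P ` ?I). mat_pow W n p i j)" .
  qed
qed

lemma almost_harmonic_oscillation:
  assumes \<beta>: "\<beta> > 0"
    and S: "\<And>i j. i \<in> {1..n} \<Longrightarrow> j \<in> {1..n} \<Longrightarrow> \<beta> \<le> (\<Sum>p\<le>N. mat_pow W n p i j)"
    and harm: "\<And>i p. i \<in> {1..n} \<Longrightarrow> p \<le> N \<Longrightarrow>
                 y i - \<delta> \<le> (\<Sum>l\<in>{1..n}. mat_pow W n p i l * y l)"
    and j: "j \<in> {1..n}" and k: "k \<in> {1..n}"
  shows "\<beta> * (y j - y k) \<le> (N + 1) * \<delta>"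
proof -
  have "Max (y ` {1..n}) \<in> y ` {1..n}"
    using j by (intro Max_in) auto
  then obtain i where i: "i \<in> {1..n}" and i_max: "y i = Max (y ` {1..n})"
    by auto
  have y_le: "y l \<le> y i" if "l \<in> {1..n}" for l
    unfolding i_max using that by simp
  define S where "S l = (\<Sum>p\<le>N. mat_pow W n p i l)" for l
  have S_nonneg: "S l \<ge> 0" for l
    unfolding S_def using i by (intro sum_nonneg mat_pow_nonneg)
  have "\<beta> * (y j - y k) \<le> \<beta> * (y i - y k)"
    using y_le[OF j] \<beta> by simp
  also have "\<dots> \<le> S k * (y i - y k)"
    using S[OF i k] y_le[OF k] unfolding S_def by (intro mult_right_mono) auto
  also have "\<dots> \<le> (\<Sum>l\<in>{1..n}. S l * (y i - y l))"
    using k y_le S_nonneg by (intro member_le_sum) auto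
  also have "\<dots> = (N + 1) * y i - (\<Sum>l\<in>{1..n}. S l * y l)"
  proof -
    have "(\<Sum>l\<in>{1..n}. S l) = N + 1"
      unfolding S_def using mat_pow_row_sum[OF i] by (subst sum.swap) simp
    then show ?thesis
      by (simp add: right_diff_distrib sum_subtractf sum_distrib_right[symmetric] mult.commute)
  qed
  also have "\<dots> \<le> (N + 1) * \<delta>"
  proof -
    have "(\<Sum>p\<le>N. y i - \<delta>) \<le> (\<Sum>p\<le>N. \<Sum>l\<in>{1..n}. mat_pow W n p i l * y l)"
      using harm[OF i] by (intro sum_mono) simp
    also have "\<dots> = (\<Sum>l\<in>{1..n}. S l * y l)"
      unfolding S_def sum_distrib_right by (rule sum.swap)
    finally show ?thesis
      by (simp add: algebra_simps)
  qed
  finally show ?thesis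
    by simp
qed

lemma abs_mat_pow_mult_vec_le:
  "i \<in> {1..n} \<Longrightarrow> \<bar>\<Sum>j\<in>{1..n}. mat_pow W n m i j * \<mu> j\<bar> \<le> (\<Sum>j\<in>{1..n}. \<bar>\<mu> j\<bar>)"
  using mat_pow_nonneg mat_pow_le_1
  by (intro order_trans[OF sum_abs] sum_mono) (simp add: abs_mult mult_left_le_one_le)

lemma mat_pow_mult_vec_over_n_tendsto_0:
  assumes i: "i \<in> {1..n}"
  shows "(\<lambda>t. (\<Sum>j\<in>{1..n}. mat_pow W n t i j * c j) / real t) \<longlonglongrightarrow> 0"
proof (rule Lim_null_comparison)
  show "\<forall>\<^sub>F t in sequentially. norm ((\<Sum>j\<in>{1..n}. mat_pow W n t i j * c j) / real t)
      \<le> (\<Sum>j\<in>{1..n}. \<bar>c j\<bar>) / real t"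
    using abs_mat_pow_mult_vec_le[OF i]
    by (intro always_eventually allI) (simp add: abs_divide divide_right_mono)
qed (rule lim_const_over_n)

lemma cesaro_avg_shift_ge:
  assumes l: "l \<in> {1..n}"
  shows "cesaro_avg W n \<mu> t l - 2 * real p * (\<Sum>j\<in>{1..n}. \<bar>\<mu> j\<bar>) / real t \<le>
           (\<Sum>l'\<in>{1..n}. mat_pow W n p l l' * cesaro_avg W n \<mu> t l')"
proof -
  define x where "x m = (\<Sum>j\<in>{1..n}. mat_pow W n m l j * \<mu> j)" for m
  have "(\<Sum>l'\<in>{1..n}. mat_pow W n p l l' * cesaro_avg W n \<mu> t l') =
          (\<Sum>m\<in>{1..t}. \<Sum>l'\<in>{1..n}.
             mat_pow W n p l l' * (\<Sum>j\<in>{1..n}. mat_pow W n m l' j * \<mu> j)) / real t"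
    unfolding cesaro_avg_def by (simp add: sum_distrib_left sum_divide_distrib) (rule sum.swap)
  also have "\<dots> = (\<Sum>m\<in>{1..t}. x (p + m)) / real t"
    unfolding x_def using mat_pow_add_mult_vec[OF l] by simp
  also have "\<dots> = cesaro_avg W n \<mu> t l + (\<Sum>m\<in>{1..t}. x (p + m) - x m) / real t"
    unfolding cesaro_avg_def x_def by (simp add: sum_subtractf diff_divide_distrib)
  also have "\<dots> \<ge> cesaro_avg W n \<mu> t l - 2 * real p * (\<Sum>j\<in>{1..n}. \<bar>\<mu> j\<bar>) / real t"
  proof -
    have "\<bar>\<Sum>m\<in>{1..t}. x (p + m) - x m\<bar> \<le> 2 * real p * (\<Sum>j\<in>{1..n}. \<bar>\<mu> j\<bar>)"
      unfolding x_def by (rule sum_shift_diff_bound) (rule abs_mat_pow_mult_vec_le[OF l])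
    then have "- (2 * real p * (\<Sum>j\<in>{1..n}. \<bar>\<mu> j\<bar>)) / real t \<le> (\<Sum>m\<in>{1..t}. x (p + m) - x m) / real t"
      by (intro divide_right_mono) auto
    then show ?thesis
      by simp
  qed
  finally show ?thesis .
qed

lemma cesaro_avg_tendsto_stationary:
  assumes sc: "strongly_connected W n"
    and v_nonneg: "\<And>i. i \<in> {1..n} \<Longrightarrow> v i \<ge> 0"
    and v_sum: "(\<Sum>i\<in>{1..n}. v i) = 1"
    and v_stat: "\<And>j. j \<in> {1..n} \<Longrightarrow> (\<Sum>i\<in>{1..n}. v i * W i j) = v j"
    and i: "i \<in> {1..n}"
  shows "(\<lambda>t. cesaro_avg W n \<mu> t i) \<longlonglongrightarrow> (\<Sum>j\<in>{1..n}. v j * \<mu> j)"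
proof -
  obtain N \<beta> where \<beta>: "\<beta> > 0"
    and S: "\<And>i j. i \<in> {1..n} \<Longrightarrow> j \<in> {1..n} \<Longrightarrow> \<beta> \<le> (\<Sum>p\<le>N. mat_pow W n p i j)"
    using strongly_connected_mat_pow_sum_ge[OF sc] by metis
  define a where "a t = cesaro_avg W n \<mu> t" for t
  define C where "C = (\<Sum>j\<in>{1..n}. \<bar>\<mu> j\<bar>)"
  define c where "c = (\<Sum>j\<in>{1..n}. v j * \<mu> j)"
  have bound: "\<bar>a t i - c\<bar> \<le> ((N + 1) * (2 * real N * C) / \<beta>) / real t" if t: "t \<ge> 1" for t
  proof -
    define \<delta> where "\<delta> = 2 * real N * C / real t"
    have harmonic: "a t l - \<delta> \<le> (\<Sum>l'\<in>{1..n}. mat_pow W n p l l' * a t l')"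
      if "l \<in> {1..n}" "p \<le> N" for l p
    proof -
      have "2 * real p * C / real t \<le> \<delta>"
        unfolding \<delta>_def C_def using that(2) by (intro divide_right_mono mult_right_mono) auto
      then show ?thesis
        using cesaro_avg_shift_ge[OF that(1), of \<mu> t p] unfolding a_def C_def by linarith
    qed
    have osc: "\<bar>a t i - a t l\<bar> \<le> (N + 1) * \<delta> / \<beta>" if l: "l \<in> {1..n}" for l
    proof -
      have "\<beta> * (a t i - a t l) \<le> (N + 1) * \<delta>" "\<beta> * (a t l - a t i) \<le> (N + 1) * \<delta>"
        using almost_harmonic_oscillation[OF \<beta> S harmonic] i l by auto
      then show ?thesis
        using \<beta> by (simp add: abs_le_iff pos_le_divide_eq mult.commute)
    qed
    have "a t i - c = (\<Sum>l\<in>{1..n}. v l * (a t i - a t l))"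
      using stationary_cesaro_avg[OF v_stat t] v_sum unfolding a_def c_def
      by (simp add: right_diff_distrib sum_subtractf sum_distrib_right[symmetric])
    then have "\<bar>a t i - c\<bar> \<le> (\<Sum>l\<in>{1..n}. v l * \<bar>a t i - a t l\<bar>)"
      using v_nonneg by (simp add: abs_mult order_trans[OF sum_abs])
    also have "\<dots> \<le> (\<Sum>l\<in>{1..n}. v l * ((N + 1) * \<delta> / \<beta>))"
      using v_nonneg osc by (intro sum_mono mult_left_mono) auto
    also have "\<dots> = (N + 1) * \<delta> / \<beta>"
      by (simp only: sum_distrib_right[symmetric] v_sum mult_1_left)
    also have "\<dots> = ((N + 1) * (2 * real N * C) / \<beta>) / real t"
      by (simp add: \<delta>_def)
    finally show ?thesis .
  qed
  have "(\<lambda>t. a t i - c) \<longlonglongrightarrow> 0"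
  proof (rule Lim_null_comparison)
    show "\<forall>\<^sub>F t in sequentially. norm (a t i - c) \<le> ((N + 1) * (2 * real N * C) / \<beta>) / real t"
      using bound by (intro eventually_sequentiallyI[of 1]) auto
  qed (rule lim_const_over_n)
  from LIM_zero_cancel[OF this] show ?thesis
    unfolding a_def c_def .
qed

end

section \<open>Triangular arrays of bounded independent variables\<close>

context prob_space
begin

lemma triangular_array_row_tail:
  fixes Z :: "nat \<Rightarrow> 'a \<Rightarrow> 'y" and h :: "nat \<Rightarrow> nat \<Rightarrow> 'y \<Rightarrow> real"
  assumes indep: "indep_vars (\<lambda>_. N) Z {1..}"
    and h_meas: "\<And>t s. h t s \<in> borel_measurable N"
    and h_bound: "\<And>t s y. y \<in> space N \<Longrightarrow> \<bar>h t s y\<bar> \<le> B" and B: "B > 0"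
    and centered: "\<And>t s. s \<ge> 1 \<Longrightarrow> expectation (\<lambda>\<omega>. h t s (Z s \<omega>)) = 0"
    and \<epsilon>: "\<epsilon> \<ge> 0"
  shows "prob {\<omega> \<in> space M. \<bar>\<Sum>s\<in>{1..t}. h t s (Z s \<omega>)\<bar> \<ge> \<epsilon> * real t}
           \<le> 2 * exp (- (\<epsilon>\<^sup>2 / (2 * B\<^sup>2))) ^ t"
proof (cases "t = 0")
  case True
  then show ?thesis
    by (simp add: order_trans[OF prob_le_1])
next
  case False
  have Z_meas: "Z s \<in> measurable M N" if "s \<ge> 1" for s
    using indep that unfolding indep_vars_def by auto
  interpret Hoeffding_ineq M "{1..t}" "\<lambda>s \<omega>. h t s (Z s \<omega>)" "\<lambda>_. - B" "\<lambda>_. B" 0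
  proof unfold_locales
    have "indep_vars (\<lambda>_. N) Z {1..t}"
      by (rule indep_vars_subset[OF indep]) auto
    then show "indep_vars (\<lambda>_. borel) (\<lambda>s \<omega>. h t s (Z s \<omega>)) {1..t}"
      by (rule indep_vars_compose2) (rule h_meas)
    show "AE \<omega> in M. h t s (Z s \<omega>) \<in> {- B..B}" if "s \<in> {1..t}" for s
    proof (intro AE_I2)
      fix \<omega> assume "\<omega> \<in> space M"
      then have "\<bar>h t s (Z s \<omega>)\<bar> \<le> B"
        using h_bound measurable_space[OF Z_meas] that by simp
      then show "h t s (Z s \<omega>) \<in> {- B..B}"
        by (simp add: abs_le_iff)
    qed
    show "0 \<equiv> \<Sum>s\<in>{1..t}. expectation (\<lambda>\<omega>. h t s (Z s \<omega>))"
      using centered by simp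
  qed simp
  have "prob {\<omega> \<in> space M. \<bar>\<Sum>s\<in>{1..t}. h t s (Z s \<omega>)\<bar> \<ge> \<epsilon> * real t}
          \<le> 2 * exp (- 2 * (\<epsilon> * real t)\<^sup>2 / (\<Sum>s\<in>{1..t}. (B - - B)\<^sup>2))"
    using Hoeffding_ineq_abs_ge[of "\<epsilon> * real t"] \<epsilon> B False by simp
  also have "\<dots> = 2 * exp (- (\<epsilon>\<^sup>2 / (2 * B\<^sup>2))) ^ t"
    using B False by (simp add: exp_of_nat_mult[symmetric] field_simps power2_eq_square)
  finally show ?thesis .
qed

lemma triangular_array_eventually_small:
  fixes Z :: "nat \<Rightarrow> 'a \<Rightarrow> 'y" and h :: "nat \<Rightarrow> nat \<Rightarrow> 'y \<Rightarrow> real"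
  assumes indep: "indep_vars (\<lambda>_. N) Z {1..}"
    and h_meas: "\<And>t s. h t s \<in> borel_measurable N"
    and h_bound: "\<And>t s y. y \<in> space N \<Longrightarrow> \<bar>h t s y\<bar> \<le> B"
    and centered: "\<And>t s. s \<ge> 1 \<Longrightarrow> expectation (\<lambda>\<omega>. h t s (Z s \<omega>)) = 0"
    and \<epsilon>: "\<epsilon> > 0"
  shows "AE \<omega> in M. eventually (\<lambda>t. \<bar>\<Sum>s\<in>{1..t}. h t s (Z s \<omega>)\<bar> < \<epsilon> * real t) sequentially"
proof -
  define B' where "B' = \<bar>B\<bar> + 1"
  have B'_pos: "B' > 0"
    unfolding B'_def by simp
  have B'_bound: "\<bar>h t s y\<bar> \<le> B'" if "y \<in> space N" for t s y
    unfolding B'_def using h_bound[OF that, of t s] by simp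
  define A where "A t = {\<omega> \<in> space M. \<bar>\<Sum>s\<in>{1..t}. h t s (Z s \<omega>)\<bar> \<ge> \<epsilon> * real t}" for t
  have Z_meas: "Z s \<in> measurable M N" if "s \<ge> 1" for s
    using indep that unfolding indep_vars_def by auto
  have A_sets: "A t \<in> sets M" for t
    unfolding A_def using Z_meas h_meas by measurable
  have "summable (\<lambda>t. prob (A t))"
  proof (rule summable_comparison_test)
    show "summable (\<lambda>t. 2 * exp (- (\<epsilon>\<^sup>2 / (2 * B'\<^sup>2))) ^ t)"
      using \<epsilon> B'_pos by (intro summable_mult summable_geometric) simp
    show "\<exists>N. \<forall>t\<ge>N. norm (prob (A t)) \<le> 2 * exp (- (\<epsilon>\<^sup>2 / (2 * B'\<^sup>2))) ^ t"
      unfolding A_def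
      using triangular_array_row_tail[where h = h, OF indep h_meas B'_bound B'_pos centered] \<epsilon>
      by auto
  qed
  then have "AE \<omega> in M. eventually (\<lambda>t. \<omega> \<in> space M - A t) sequentially"
    by (intro borel_cantelli_AE1 A_sets) (simp_all add: emeasure_eq_measure)
  then show ?thesis
    by (rule AE_mp) (auto simp: A_def elim!: eventually_mono intro!: AE_I2)
qed

lemma triangular_array_slln:
  fixes Z :: "nat \<Rightarrow> 'a \<Rightarrow> 'y" and h :: "nat \<Rightarrow> nat \<Rightarrow> 'y \<Rightarrow> real"
  assumes indep: "indep_vars (\<lambda>_. N) Z {1..}"
    and h_meas: "\<And>t s. h t s \<in> borel_measurable N"
    and h_bound: "\<And>t s y. y \<in> space N \<Longrightarrow> \<bar>h t s y\<bar> \<le> B"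
    and centered: "\<And>t s. s \<ge> 1 \<Longrightarrow> expectation (\<lambda>\<omega>. h t s (Z s \<omega>)) = 0"
  shows "AE \<omega> in M. (\<lambda>t. (\<Sum>s\<in>{1..t}. h t s (Z s \<omega>)) / real t) \<longlonglongrightarrow> 0"
proof -
  have "AE \<omega> in M. \<forall>m. eventually
          (\<lambda>t. \<bar>\<Sum>s\<in>{1..t}. h t s (Z s \<omega>)\<bar> < inverse (real (Suc m)) * real t) sequentially"
    unfolding AE_all_countable
    by (intro allI triangular_array_eventually_small[OF indep h_meas h_bound centered]) auto
  then show ?thesis
  proof (rule AE_mp, intro AE_I2 impI)
    fix \<omega>
    assume small: "\<forall>m. eventually
      (\<lambda>t. \<bar>\<Sum>s\<in>{1..t}. h t s (Z s \<omega>)\<bar> < inverse (real (Suc m)) * real t) sequentially"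
    show "(\<lambda>t. (\<Sum>s\<in>{1..t}. h t s (Z s \<omega>)) / real t) \<longlonglongrightarrow> 0"
    proof (rule tendstoI)
      fix e :: real
      assume "e > 0"
      then obtain m where m: "inverse (real (Suc m)) < e"
        using reals_Archimedean by blast
      show "eventually (\<lambda>t. dist ((\<Sum>s\<in>{1..t}. h t s (Z s \<omega>)) / real t) 0 < e) sequentially"
        using small[rule_format, of m] eventually_gt_at_top[of 0]
      proof eventually_elim
        case (elim t)
        have "inverse (real (Suc m)) * real t < e * real t"
          using m elim(2) by (intro mult_strict_right_mono) auto
        with elim(1) have "\<bar>\<Sum>s\<in>{1..t}. h t s (Z s \<omega>)\<bar> < e * real t"
          by (rule less_trans)
        then show ?case
          using elim(2) by (simp add: dist_real_def abs_divide divide_less_eq)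
      qed
    qed
  qed
qed

lemma weighted_triangular_array_slln:
  fixes Z :: "nat \<Rightarrow> 'a \<Rightarrow> 'y" and g :: "nat \<Rightarrow> 'y \<Rightarrow> real" and c :: "nat \<Rightarrow> nat \<Rightarrow> nat \<Rightarrow> real"
  assumes indep: "indep_vars (\<lambda>_. N) Z {1..}"
    and J: "finite J"
    and g_meas: "\<And>j. j \<in> J \<Longrightarrow> g j \<in> borel_measurable N"
    and g_bound: "\<And>j y. j \<in> J \<Longrightarrow> y \<in> space N \<Longrightarrow> \<bar>g j y\<bar> \<le> B"
    and centered: "\<And>s j. s \<ge> 1 \<Longrightarrow> j \<in> J \<Longrightarrow> expectation (\<lambda>\<omega>. g j (Z s \<omega>)) = 0"
    and c_bound: "\<And>t s j. \<bar>c t s j\<bar> \<le> 1"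
  shows "AE \<omega> in M. (\<lambda>t. (\<Sum>s\<in>{1..t}. \<Sum>j\<in>J. c t s j * g j (Z s \<omega>)) / real t) \<longlonglongrightarrow> 0"
proof (rule triangular_array_slln[OF indep])
  show "(\<lambda>y. \<Sum>j\<in>J. c t s j * g j y) \<in> borel_measurable N" for t s
    using g_meas by measurable
  show "\<bar>\<Sum>j\<in>J. c t s j * g j y\<bar> \<le> real (card J) * B" if "y \<in> space N" for t s y
  proof -
    have "\<bar>c t s j * g j y\<bar> \<le> B" if "j \<in> J" for j
      using mult_mono[OF c_bound[of t s j] g_bound[OF that \<open>y \<in> space N\<close>]]
      by (simp add: abs_mult)
    then show ?thesis
      by (intro order_trans[OF sum_abs]) (simp add: sum_bounded_above)
  qed
  show "expectation (\<lambda>\<omega>. \<Sum>j\<in>J. c t s j * g j (Z s \<omega>)) = 0" if s: "s \<ge> 1" for t s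
  proof -
    have Z_meas: "Z s \<in> measurable M N"
      using indep s unfolding indep_vars_def by auto
    have "integrable M (\<lambda>\<omega>. g j (Z s \<omega>))" if "j \<in> J" for j
      using g_bound[OF that] g_meas[OF that] measurable_space[OF Z_meas] Z_meas
      by (intro integrable_const_bound[where B = B]) auto
    then show ?thesis
      using centered[OF s] by (simp add: integral_sum)
  qed
qed

end

section \<open>The learning rule\<close>

locale learning_rule =
  fixes W :: "nat \<Rightarrow> nat \<Rightarrow> real" and n M :: nat and f :: "nat \<Rightarrow> nat \<Rightarrow> 'x \<Rightarrow> real"
    and q0 :: "nat \<Rightarrow> nat \<Rightarrow> real" and obs :: "nat \<Rightarrow> nat \<Rightarrow> 'x"
  assumes M_pos: "M \<ge> 1"
    and f_obs_pos: "\<And>s j k. s \<ge> 1 \<Longrightarrow> j \<in> {1..n} \<Longrightarrow> k \<in> {1..M} \<Longrightarrow> f j k (obs s j) > 0"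
    and q0_pos: "\<And>i k. i \<in> {1..n} \<Longrightarrow> k \<in> {1..M} \<Longrightarrow> q0 i k > 0"
    and q0_sum: "\<And>i. i \<in> {1..n} \<Longrightarrow> (\<Sum>k\<in>{1..M}. q0 i k) = 1"
begin

abbreviation "q \<equiv> belief W n M f q0 obs"

definition log_weight :: "nat \<Rightarrow> nat \<Rightarrow> nat \<Rightarrow> real" where
  "log_weight t i k = (\<Sum>j\<in>{1..n}. W i j * ln (f j k (obs (Suc t) j) * q t j k /
     (\<Sum>c\<in>{1..M}. f j c (obs (Suc t) j) * q t j c)))"

lemma belief_Suc:
  "q (Suc t) i k = exp (log_weight t i k) / (\<Sum>a\<in>{1..M}. exp (log_weight t i a))"
  by (simp add: log_weight_def Let_def)

lemma belief_pos: "i \<in> {1..n} \<Longrightarrow> k \<in> {1..M} \<Longrightarrow> q t i k > 0"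
proof (cases t)
  case (Suc t')
  have "(\<Sum>a\<in>{1..M}. exp (log_weight t' i a)) > 0"
    using M_pos by (intro sum_pos) auto
  then show ?thesis
    unfolding Suc belief_Suc by simp
qed (simp add: q0_pos)

lemma belief_sum: "i \<in> {1..n} \<Longrightarrow> (\<Sum>k\<in>{1..M}. q t i k) = 1"
proof (cases t)
  case (Suc t')
  have "(\<Sum>a\<in>{1..M}. exp (log_weight t' i a)) > 0"
    using M_pos by (intro sum_pos) auto
  then show ?thesis
    unfolding Suc belief_Suc by (simp add: sum_divide_distrib[symmetric])
qed (use q0_sum in simp)

lemma ln_belief_ratio_Suc:
  assumes i: "i \<in> {1..n}" and k: "k \<in> {1..M}" and a: "a \<in> {1..M}"
  shows "ln (q (Suc t) i k / q (Suc t) i a) =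
    (\<Sum>j\<in>{1..n}. W i j * (ln (q t j k / q t j a) +
                            ln (f j k (obs (Suc t) j) / f j a (obs (Suc t) j))))"
proof -
  define Z where "Z j = (\<Sum>c\<in>{1..M}. f j c (obs (Suc t) j) * q t j c)" for j
  have Z_pos: "Z j > 0" if "j \<in> {1..n}" for j
    unfolding Z_def using M_pos that f_obs_pos belief_pos by (intro sum_pos mult_pos_pos) auto
  have "(\<Sum>c\<in>{1..M}. exp (log_weight t i c)) > 0"
    using M_pos by (intro sum_pos) auto
  then have "ln (q (Suc t) i k / q (Suc t) i a) = log_weight t i k - log_weight t i a"
    unfolding belief_Suc by (simp add: exp_diff[symmetric])
  also have "\<dots> = (\<Sum>j\<in>{1..n}. W i j * (ln (f j k (obs (Suc t) j) * q t j k / Z j) -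
                                          ln (f j a (obs (Suc t) j) * q t j a / Z j)))"
    unfolding log_weight_def Z_def by (simp add: sum_subtractf right_diff_distrib)
  also have "\<dots> = (\<Sum>j\<in>{1..n}. W i j * (ln (q t j k / q t j a) +
                    ln (f j k (obs (Suc t) j) / f j a (obs (Suc t) j))))"
  proof (intro sum.cong refl arg_cong2[where f = "(*)"])
    fix j assume j: "j \<in> {1..n}"
    have "f j k (obs (Suc t) j) > 0" "f j a (obs (Suc t) j) > 0" "q t j k > 0" "q t j a > 0"
      using f_obs_pos[of "Suc t"] belief_pos j k a by auto
    then show "ln (f j k (obs (Suc t) j) * q t j k / Z j) -
        ln (f j a (obs (Suc t) j) * q t j a / Z j) =
        ln (q t j k / q t j a) + ln (f j k (obs (Suc t) j) / f j a (obs (Suc t) j))"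
      using Z_pos[OF j] by (simp add: ln_div ln_mult)
  qed
  finally show ?thesis .
qed

end

section \<open>Exponential rates\<close>

lemma tendsto_Max_image:
  fixes g :: "'a \<Rightarrow> 'b \<Rightarrow> real"
  assumes "finite A" "A \<noteq> {}" "\<And>a. a \<in> A \<Longrightarrow> ((\<lambda>t. g a t) \<longlongrightarrow> c a) F"
  shows "((\<lambda>t. Max ((\<lambda>a. g a t) ` A)) \<longlongrightarrow> Max (c ` A)) F"
  using assms
proof (induction A rule: finite_ne_induct)
  case (insert a A)
  then show ?case
    by (simp add: tendsto_max)
qed simp

lemma ln_sum_exp_rate:
  fixes \<phi> :: "'a \<Rightarrow> nat \<Rightarrow> real"
  assumes A: "finite A" "A \<noteq> {}"
    and lim: "\<And>a. a \<in> A \<Longrightarrow> (\<lambda>t. \<phi> a t / real t) \<longlonglongrightarrow> c a"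
  shows "(\<lambda>t. ln (\<Sum>a\<in>A. exp (\<phi> a t)) / real t) \<longlonglongrightarrow> Max (c ` A)"
proof (rule tendsto_sandwich)
  define m where "m t = Max ((\<lambda>a. \<phi> a t / real t) ` A)" for t
  have m_lim: "m \<longlonglongrightarrow> Max (c ` A)"
    unfolding m_def using A lim by (rule tendsto_Max_image)
  have bounds: "m t \<le> ln (\<Sum>a\<in>A. exp (\<phi> a t)) / real t"
      "ln (\<Sum>a\<in>A. exp (\<phi> a t)) / real t \<le> ln (card A) / real t + m t" if t: "t > 0" for t
  proof -
    have sum_pos: "(\<Sum>a\<in>A. exp (\<phi> a t)) > 0"
      using A by (intro sum_pos) auto
    have "m t \<in> (\<lambda>a. \<phi> a t / real t) ` A"
      unfolding m_def using A by (intro Max_in) auto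
    then obtain a where a: "a \<in> A" "m t = \<phi> a t / real t"
      by auto
    have "\<phi> a t \<le> ln (\<Sum>a\<in>A. exp (\<phi> a t))"
      using member_le_sum[of a A "\<lambda>a. exp (\<phi> a t)"] a A sum_pos by (simp add: ln_ge_iff)
    then show "m t \<le> ln (\<Sum>a\<in>A. exp (\<phi> a t)) / real t"
      using a t by (simp add: divide_right_mono)
    have "\<phi> b t \<le> real t * m t" if "b \<in> A" for b
      using Max_ge[of "(\<lambda>a. \<phi> a t / real t) ` A" "\<phi> b t / real t"] A that t
      unfolding m_def by (simp add: divide_le_eq mult.commute)
    then have "(\<Sum>a\<in>A. exp (\<phi> a t)) \<le> card A * exp (real t * m t)"
      using sum_bounded_above[of A "\<lambda>a. exp (\<phi> a t)" "exp (real t * m t)"] by simp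
    then have "ln (\<Sum>a\<in>A. exp (\<phi> a t)) \<le> ln (card A) + real t * m t"
      using sum_pos A
      by (simp add: ln_mult ln_le_cancel_iff[symmetric] card_gt_0_iff del: ln_le_cancel_iff)
    then show "ln (\<Sum>a\<in>A. exp (\<phi> a t)) / real t \<le> ln (card A) / real t + m t"
      using t by (simp add: divide_le_eq algebra_simps)
  qed
  show "\<forall>\<^sub>F t in sequentially. m t \<le> ln (\<Sum>a\<in>A. exp (\<phi> a t)) / real t"
    using bounds(1) by (intro eventually_sequentiallyI[of 1]) auto
  show "\<forall>\<^sub>F t in sequentially. ln (\<Sum>a\<in>A. exp (\<phi> a t)) / real t \<le> ln (card A) / real t + m t"
    using bounds(2) by (intro eventually_sequentiallyI[of 1]) auto
  show "m \<longlonglongrightarrow> Max (c ` A)"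
    by (rule m_lim)
  show "(\<lambda>t. ln (card A) / real t + m t) \<longlonglongrightarrow> Max (c ` A)"
    using tendsto_add[OF lim_const_over_n m_lim] by simp
qed

lemma ln_one_plus_rate:
  fixes S :: "nat \<Rightarrow> real"
  assumes S_pos: "\<And>t. S t > 0"
    and lim: "(\<lambda>t. ln (S t) / real t) \<longlonglongrightarrow> L" and L: "L \<le> 0"
  shows "(\<lambda>t. ln (1 + S t) / real t) \<longlonglongrightarrow> 0"
proof (rule tendsto_sandwich)
  show "\<forall>\<^sub>F t in sequentially. 0 \<le> ln (1 + S t) / real t"
    using S_pos
    by (intro always_eventually allI divide_nonneg_nonneg ln_ge_zero) (auto simp: less_imp_le)
  have "ln (1 + S t) \<le> ln 2 + max 0 (ln (S t))" for t
  proof -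
    have "1 + S t \<le> 2 * max 1 (S t)"
      by simp
    then have "ln (1 + S t) \<le> ln (2 * max 1 (S t))"
      using S_pos[of t] by simp
    also have "\<dots> = ln 2 + max 0 (ln (S t))"
      using S_pos[of t] by (simp add: ln_mult max_def)
    finally show ?thesis .
  qed
  then have "ln (1 + S t) / real t \<le> ln 2 / real t + max 0 (ln (S t) / real t)" for t
    using divide_right_mono[of "ln (1 + S t)" "ln 2 + max 0 (ln (S t))" "real t"]
    by (simp add: add_divide_distrib max_divide_distrib_right)
  then show "\<forall>\<^sub>F t in sequentially.
      ln (1 + S t) / real t \<le> ln 2 / real t + max 0 (ln (S t) / real t)"
    by simp
  have "(\<lambda>t. ln 2 / real t + max 0 (ln (S t) / real t)) \<longlonglongrightarrow> 0 + max 0 L"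
    by (intro tendsto_add lim_const_over_n tendsto_max tendsto_const lim)
  then show "(\<lambda>t. ln 2 / real t + max 0 (ln (S t) / real t)) \<longlonglongrightarrow> 0"
    using L by simp
qed simp

section \<open>Kullback-Leibler divergence between densities\<close>

context sigma_finite_measure
begin

lemma KL_density_eq_neg_integral_ln_ratio:
  fixes f g :: "'a \<Rightarrow> real"
  assumes [measurable]: "f \<in> borel_measurable M" "g \<in> borel_measurable M"
    and f_pos: "\<And>x. x \<in> space M \<Longrightarrow> f x > 0" and g_pos: "\<And>x. x \<in> space M \<Longrightarrow> g x > 0"
  shows "KL_divergence (exp 1) (density M f) (density M g) = - (\<integral>x. ln (f x / g x) \<partial>density M g)"
proof -
  have "KL_divergence (exp 1) (density M f) (density M g) = (\<integral>x. g x * log (exp 1) (g x / f x) \<partial>M)"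
    using f_pos g_pos by (intro KL_density_density) (auto intro!: AE_I2 less_imp_le dest: f_pos)
  also have "\<dots> = (\<integral>x. - (g x * ln (f x / g x)) \<partial>M)"
    using f_pos g_pos
    by (intro Bochner_Integration.integral_cong) (simp_all add: log_def ln_div algebra_simps)
  also have "\<dots> = - (\<integral>x. ln (f x / g x) \<partial>density M g)"
    using g_pos by (simp add: integral_density less_imp_le)
  finally show ?thesis .
qed

lemma KL_density_nonneg_if_bounded_ln_ratio:
  fixes f g :: "'a \<Rightarrow> real"
  assumes [measurable]: "f \<in> borel_measurable M" "g \<in> borel_measurable M"
    and f_pos: "\<And>x. x \<in> space M \<Longrightarrow> f x > 0" and g_pos: "\<And>x. x \<in> space M \<Longrightarrow> g x > 0"
    and prob: "prob_space (density M f)" "prob_space (density M g)"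
    and bound: "\<And>x. x \<in> space M \<Longrightarrow> \<bar>ln (f x / g x)\<bar> \<le> L"
  shows "KL_divergence (exp 1) (density M f) (density M g) \<ge> 0"
proof (rule KL_density_density_nonneg)
  interpret G: prob_space "density M g"
    by (rule prob(2))
  have "integrable (density M g) (\<lambda>x. ln (f x / g x))"
    using bound by (intro G.integrable_const_bound[where B = L]) auto
  then have int: "integrable M (\<lambda>x. g x * ln (f x / g x))"
    using g_pos by (subst (asm) integrable_density) (auto intro!: AE_I2 less_imp_le)
  have eq: "g x * log (exp 1) (g x / f x) = - (g x * ln (f x / g x))" if "x \<in> space M" for x
    using f_pos[OF that] g_pos[OF that] by (simp add: log_def ln_div algebra_simps)
  show "integrable M (\<lambda>x. g x * log (exp 1) (g x / f x))"
    by (rule Bochner_Integration.integrable_cong[OF refl, where g = "\<lambda>x. - (g x * ln (f x / g x))",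
          THEN iffD2]) (simp_all add: eq int)
qed (use f_pos g_pos prob in \<open>auto intro!: AE_I2 less_imp_le dest: f_pos\<close>)

end

section \<open>The social learning model\<close>

locale social_learning = row_stochastic W n + P: prob_space P
  for W :: "nat \<Rightarrow> nat \<Rightarrow> real" and n :: nat and P :: "'w measure" +
  fixes lam :: "nat \<Rightarrow> 'x measure" and f :: "nat \<Rightarrow> nat \<Rightarrow> 'x \<Rightarrow> real"
    and X :: "nat \<Rightarrow> 'w \<Rightarrow> nat \<Rightarrow> 'x" and q0 :: "nat \<Rightarrow> nat \<Rightarrow> real" and v :: "nat \<Rightarrow> real"
    and M :: nat and L :: real
  assumes M_ge2: "M \<ge> 2"
    and lam_sf: "\<And>i. i \<in> {1..n} \<Longrightarrow> sigma_finite_measure (lam i)"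
    and f_meas: "\<And>i k. i \<in> {1..n} \<Longrightarrow> k \<in> {1..M} \<Longrightarrow> f i k \<in> borel_measurable (lam i)"
    and f_pos: "\<And>i k x. i \<in> {1..n} \<Longrightarrow> k \<in> {1..M} \<Longrightarrow> x \<in> space (lam i) \<Longrightarrow> f i k x > 0"
    and f_prob: "\<And>i k. i \<in> {1..n} \<Longrightarrow> k \<in> {1..M} \<Longrightarrow>
                   prob_space (density (lam i) (\<lambda>x. ennreal (f i k x)))"
    and X_meas: "\<And>t i. t \<ge> 1 \<Longrightarrow> i \<in> {1..n} \<Longrightarrow> (\<lambda>\<omega>. X t \<omega> i) \<in> measurable P (lam i)"
    and X_indep: "P.indep_vars (\<lambda>_. PiM {1..n} lam) (\<lambda>t \<omega>. \<lambda>i\<in>{1..n}. X t \<omega> i) {1..}"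
    and X_marg: "\<And>t i. t \<ge> 1 \<Longrightarrow> i \<in> {1..n} \<Longrightarrow>
                    distr P (lam i) (\<lambda>\<omega>. X t \<omega> i) = density (lam i) (\<lambda>x. ennreal (f i M x))"
    and q0_pos: "\<And>i k. i \<in> {1..n} \<Longrightarrow> k \<in> {1..M} \<Longrightarrow> q0 i k > 0"
    and q0_sum: "\<And>i. i \<in> {1..n} \<Longrightarrow> (\<Sum>k\<in>{1..M}. q0 i k) = 1"
    and v_nonneg: "\<And>i. i \<in> {1..n} \<Longrightarrow> v i \<ge> 0"
    and v_sum: "(\<Sum>i\<in>{1..n}. v i) = 1"
    and v_stat: "\<And>j. j \<in> {1..n} \<Longrightarrow> (\<Sum>i\<in>{1..n}. v i * W i j) = v j"
    and connected: "strongly_connected W n"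
    and ln_ratio_bound: "\<And>i j k x. i \<in> {1..n} \<Longrightarrow> j \<in> {1..M} \<Longrightarrow> k \<in> {1..M} \<Longrightarrow>
                          x \<in> space (lam i) \<Longrightarrow> \<bar>ln (f i j x / f i k x)\<bar> \<le> L"
begin

abbreviation "q_at \<omega> \<equiv> belief W n M f q0 (\<lambda>s. X s \<omega>)"

definition llr :: "nat \<Rightarrow> nat \<Rightarrow> 'x \<Rightarrow> real" where
  "llr j k x = ln (f j k x / f j M x)"

definition mean_llr :: "nat \<Rightarrow> nat \<Rightarrow> real" where
  "mean_llr j k = (\<integral>x. llr j k x \<partial>density (lam j) (\<lambda>x. ennreal (f j M x)))"

definition network_KL :: "nat \<Rightarrow> real" where
  "network_KL k = (\<Sum>j\<in>{1..n}. v j * KLnode lam f j M k)"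

lemma M_mem: "M \<in> {1..M}"
  using M_ge2 by simp

lemma llr_measurable: "j \<in> {1..n} \<Longrightarrow> k \<in> {1..M} \<Longrightarrow> llr j k \<in> borel_measurable (lam j)"
  unfolding llr_def using f_meas M_mem by measurable

lemma KLnode_eq_neg_mean_llr: "j \<in> {1..n} \<Longrightarrow> k \<in> {1..M} \<Longrightarrow> KLnode lam f j M k = - mean_llr j k"
  unfolding KLnode_def mean_llr_def llr_def
  using sigma_finite_measure.KL_density_eq_neg_integral_ln_ratio[OF lam_sf f_meas f_meas f_pos f_pos]
    M_mem
  by blast

lemma network_KL_nonneg: "k \<in> {1..M} \<Longrightarrow> network_KL k \<ge> 0"
  unfolding network_KL_def KLnode_def using M_mem
  by (intro sum_nonneg mult_nonneg_nonneg v_nonneg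
      sigma_finite_measure.KL_density_nonneg_if_bounded_ln_ratio[OF lam_sf f_meas f_meas f_pos f_pos
        f_prob f_prob ln_ratio_bound])

lemma obs_in_space: "s \<ge> 1 \<Longrightarrow> j \<in> {1..n} \<Longrightarrow> \<omega> \<in> space P \<Longrightarrow> X s \<omega> j \<in> space (lam j)"
  using measurable_space[OF X_meas] by blast

(* W occurs in no assumption of learning_rule, so it is not an argument of its predicate. *)
lemma learning_rule_obs: "\<omega> \<in> space P \<Longrightarrow> learning_rule n M f q0 (\<lambda>s. X s \<omega>)"
  using M_ge2 f_pos[OF _ _ obs_in_space] q0_pos q0_sum by unfold_locales auto

lemma integrable_llr_obs:
  assumes "s \<ge> 1" "j \<in> {1..n}" "k \<in> {1..M}"
  shows "integrable P (\<lambda>\<omega>. llr j k (X s \<omega> j))"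
proof (rule P.integrable_const_bound[where B = L])
  show "AE \<omega> in P. norm (llr j k (X s \<omega> j)) \<le> L"
    using ln_ratio_bound[OF assms(2,3) M_mem obs_in_space[OF assms(1,2)]] by (auto simp: llr_def)
  show "(\<lambda>\<omega>. llr j k (X s \<omega> j)) \<in> borel_measurable P"
    using measurable_compose[OF X_meas[OF assms(1,2)] llr_measurable[OF assms(2,3)]] .
qed

lemma expectation_llr_obs:
  "s \<ge> 1 \<Longrightarrow> j \<in> {1..n} \<Longrightarrow> k \<in> {1..M} \<Longrightarrow> P.expectation (\<lambda>\<omega>. llr j k (X s \<omega> j)) = mean_llr j k"
  using integral_distr[OF X_meas llr_measurable] X_marg by (simp add: mean_llr_def)

lemma ln_belief_ratio_decomposition:
  assumes \<omega>: "\<omega> \<in> space P" and i: "i \<in> {1..n}" and k: "k \<in> {1..M}"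
  shows "ln (q_at \<omega> t i k / q_at \<omega> t i M) =
    (\<Sum>j\<in>{1..n}. mat_pow W n t i j * ln (q0 j k / q0 j M)) +
    (\<Sum>m\<in>{1..t}. \<Sum>j\<in>{1..n}. mat_pow W n m i j * mean_llr j k) +
    (\<Sum>s\<in>{1..t}. \<Sum>j\<in>{1..n}. mat_pow W n (Suc t - s) i j * (llr j k (X s \<omega> j) - mean_llr j k))"
proof -
  interpret learning_rule W n M f q0 "\<lambda>s. X s \<omega>"
    using learning_rule_obs[OF \<omega>] .
  have "ln (q t i k / q t i M) =
      (\<Sum>j\<in>{1..n}. mat_pow W n t i j * ln (q 0 j k / q 0 j M)) +
      (\<Sum>s\<in>{1..t}. \<Sum>j\<in>{1..n}. mat_pow W n (Suc t - s) i j * ln (f j k (X s \<omega> j) / f j M (X s \<omega> j)))"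
    by (rule linear_recursion_closed_form[where x = "\<lambda>t l. ln (q t l k / q t l M)"
          and u = "\<lambda>s j. ln (f j k (X s \<omega> j) / f j M (X s \<omega> j))", OF _ i])
       (rule ln_belief_ratio_Suc[OF _ k M_mem])
  then have "ln (q_at \<omega> t i k / q_at \<omega> t i M) =
      (\<Sum>j\<in>{1..n}. mat_pow W n t i j * ln (q0 j k / q0 j M)) +
      (\<Sum>s\<in>{1..t}. \<Sum>j\<in>{1..n}. mat_pow W n (Suc t - s) i j * llr j k (X s \<omega> j))"
    by (simp add: llr_def)
  also have "(\<Sum>s\<in>{1..t}. \<Sum>j\<in>{1..n}. mat_pow W n (Suc t - s) i j * llr j k (X s \<omega> j)) =
      (\<Sum>s\<in>{1..t}. \<Sum>j\<in>{1..n}. mat_pow W n (Suc t - s) i j * mean_llr j k) +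
      (\<Sum>s\<in>{1..t}. \<Sum>j\<in>{1..n}. mat_pow W n (Suc t - s) i j * (llr j k (X s \<omega> j) - mean_llr j k))"
    by (simp add: sum.distrib[symmetric] algebra_simps)
  also have "(\<Sum>s\<in>{1..t}. \<Sum>j\<in>{1..n}. mat_pow W n (Suc t - s) i j * mean_llr j k) =
      (\<Sum>m\<in>{1..t}. \<Sum>j\<in>{1..n}. mat_pow W n m i j * mean_llr j k)"
    by (subst sum.atLeastAtMost_rev) (auto intro!: sum.cong simp: Suc_diff_le)
  finally show ?thesis
    by simp
qed

lemma fluctuation_slln:
  assumes i: "i \<in> {1..n}" and k: "k \<in> {1..M}"
  shows "AE \<omega> in P. (\<lambda>t. (\<Sum>s\<in>{1..t}. \<Sum>j\<in>{1..n}.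
           mat_pow W n (Suc t - s) i j * (llr j k (X s \<omega> j) - mean_llr j k)) / real t) \<longlonglongrightarrow> 0"
proof -
  define c where "c t s j = (if j \<in> {1..n} then mat_pow W n (Suc t - s) i j else 0)" for t s j
  define g where "g j y = llr j k (y j) - mean_llr j k" for j and y :: "nat \<Rightarrow> 'x"
  have "AE \<omega> in P. (\<lambda>t. (\<Sum>s\<in>{1..t}. \<Sum>j\<in>{1..n}. c t s j * g j (\<lambda>i\<in>{1..n}. X s \<omega> i)) / real t)
          \<longlonglongrightarrow> 0"
  proof (rule P.weighted_triangular_array_slln[OF X_indep,
        where B = "L + (\<Sum>j\<in>{1..n}. \<bar>mean_llr j k\<bar>)"])
    show "g j \<in> borel_measurable (PiM {1..n} lam)" if "j \<in> {1..n}" for j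
      unfolding g_def
      using measurable_compose[OF measurable_component_singleton[OF that, of lam] llr_measurable[OF that k]]
      by measurable
    show "\<bar>g j y\<bar> \<le> L + (\<Sum>j\<in>{1..n}. \<bar>mean_llr j k\<bar>)"
      if j: "j \<in> {1..n}" and y: "y \<in> space (PiM {1..n} lam)" for j y
    proof -
      have "\<bar>llr j k (y j)\<bar> \<le> L"
        using ln_ratio_bound[OF j k M_mem] y j by (auto simp: llr_def space_PiM PiE_iff)
      moreover have "\<bar>mean_llr j k\<bar> \<le> (\<Sum>j\<in>{1..n}. \<bar>mean_llr j k\<bar>)"
        using j by (intro member_le_sum) auto
      ultimately show ?thesis
        unfolding g_def by linarith
    qed
    show "P.expectation (\<lambda>\<omega>. g j (\<lambda>i\<in>{1..n}. X s \<omega> i)) = 0" if "s \<ge> 1" "j \<in> {1..n}" for s j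
      using that integrable_llr_obs[OF that k] expectation_llr_obs[OF that k]
      by (simp add: g_def P.prob_space)
    show "\<bar>c t s j\<bar> \<le> 1" for t s j
      unfolding c_def using mat_pow_nonneg[OF i] mat_pow_le_1[OF i] by auto
  qed simp
  then show ?thesis
    by (simp add: c_def g_def)
qed

lemma ln_belief_ratio_rate:
  assumes i: "i \<in> {1..n}" and k: "k \<in> {1..M}"
  shows "AE \<omega> in P. (\<lambda>t. ln (q_at \<omega> t i k / q_at \<omega> t i M) / real t) \<longlonglongrightarrow> - network_KL k"
proof -
  have "(\<lambda>t. cesaro_avg W n (\<lambda>j. mean_llr j k) t i) \<longlonglongrightarrow> (\<Sum>j\<in>{1..n}. v j * mean_llr j k)"
    by (rule cesaro_avg_tendsto_stationary[OF connected v_nonneg v_sum v_stat i])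
  moreover have "(\<Sum>j\<in>{1..n}. v j * mean_llr j k) = - network_KL k"
    unfolding network_KL_def using KLnode_eq_neg_mean_llr[OF _ k] by (simp add: sum_negf[symmetric])
  ultimately have drift: "(\<lambda>t. (\<Sum>m\<in>{1..t}. \<Sum>j\<in>{1..n}. mat_pow W n m i j * mean_llr j k) / real t)
      \<longlonglongrightarrow> - network_KL k"
    unfolding cesaro_avg_def by simp
  have initial: "(\<lambda>t. (\<Sum>j\<in>{1..n}. mat_pow W n t i j * ln (q0 j k / q0 j M)) / real t) \<longlonglongrightarrow> 0"
    by (rule mat_pow_mult_vec_over_n_tendsto_0[OF i])
  show ?thesis
    using fluctuation_slln[OF i k]
  proof (rule AE_mp, intro AE_I2 impI)
    fix \<omega> assume \<omega>: "\<omega> \<in> space P"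
      and fluctuation: "(\<lambda>t. (\<Sum>s\<in>{1..t}. \<Sum>j\<in>{1..n}.
         mat_pow W n (Suc t - s) i j * (llr j k (X s \<omega> j) - mean_llr j k)) / real t) \<longlonglongrightarrow> 0"
    have "(\<lambda>t. (\<Sum>j\<in>{1..n}. mat_pow W n t i j * ln (q0 j k / q0 j M)) / real t +
        (\<Sum>m\<in>{1..t}. \<Sum>j\<in>{1..n}. mat_pow W n m i j * mean_llr j k) / real t +
        (\<Sum>s\<in>{1..t}. \<Sum>j\<in>{1..n}.
           mat_pow W n (Suc t - s) i j * (llr j k (X s \<omega> j) - mean_llr j k)) / real t)
        \<longlonglongrightarrow> 0 + - network_KL k + 0"
      by (intro tendsto_add initial drift fluctuation)
    then show "(\<lambda>t. ln (q_at \<omega> t i k / q_at \<omega> t i M) / real t) \<longlonglongrightarrow> - network_KL k"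
      by (simp add: ln_belief_ratio_decomposition[OF \<omega> i k] add_divide_distrib)
  qed
qed

lemma belief_error_rate:
  assumes i: "i \<in> {1..n}"
  shows "AE \<omega> in P. (\<lambda>t. - (1 / real t) * ln (1 - q_at \<omega> t i M)) \<longlonglongrightarrow> Min (network_KL ` {1..M - 1})"
proof -
  let ?A = "{1..M - 1}"
  have A: "finite ?A" "?A \<noteq> {}"
    using M_ge2 by auto
  have A_sub: "k \<in> {1..M}" "k \<noteq> M" if "k \<in> ?A" for k
    using that by auto
  have "AE \<omega> in P. \<forall>k\<in>?A. (\<lambda>t. ln (q_at \<omega> t i k / q_at \<omega> t i M) / real t) \<longlonglongrightarrow> - network_KL k"
    using A A_sub by (intro eventually_ball_finite ballI ln_belief_ratio_rate[OF i]) auto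
  then show ?thesis
  proof (rule AE_mp, intro AE_I2 impI)
    fix \<omega> assume \<omega>: "\<omega> \<in> space P"
      and rates: "\<forall>k\<in>?A. (\<lambda>t. ln (q_at \<omega> t i k / q_at \<omega> t i M) / real t) \<longlonglongrightarrow> - network_KL k"
    interpret learning_rule W n M f q0 "\<lambda>s. X s \<omega>"
      using learning_rule_obs[OF \<omega>] .
    define S where "S t = (\<Sum>k\<in>?A. exp (ln (q t i k / q t i M)))" for t
    have rest: "(\<Sum>k\<in>?A. q t i k) = 1 - q t i M" for t
    proof -
      have "{1..M} = insert M ?A" "M \<notin> ?A"
        using M_ge2 by auto
      then show ?thesis
        using belief_sum[OF i, of t] A by simp
    qed
    have qM: "q t i M > 0" "q t i M < 1" for t
    proof -
      show "q t i M > 0"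
        using belief_pos[OF i M_mem] .
      have "(\<Sum>k\<in>?A. q t i k) > 0"
        using A A_sub belief_pos[OF i] by (intro sum_pos) auto
      then show "q t i M < 1"
        unfolding rest by simp
    qed
    have S_eq: "S t = (1 - q t i M) / q t i M" for t
    proof -
      have "S t = (\<Sum>k\<in>?A. q t i k) / q t i M"
        unfolding S_def sum_divide_distrib using A_sub belief_pos[OF i] qM(1)
        by (intro sum.cong refl) simp
      then show ?thesis
        unfolding rest .
    qed
    have S_pos: "S t > 0" for t
      unfolding S_eq using qM[of t] by simp
    have error_eq: "- (1 / real t) * ln (1 - q t i M) = ln (1 + S t) / real t - ln (S t) / real t"
      for t
    proof -
      have "1 + S t = 1 / q t i M"
        unfolding S_eq using qM(1)[of t] by (simp add: field_simps)
      then have "ln (1 + S t) - ln (S t) = - ln (1 - q t i M)"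
        unfolding S_eq using qM[of t] by (simp add: ln_div)
      then show ?thesis
        by (simp add: diff_divide_distrib[symmetric])
    qed
    have "(\<lambda>t. ln (S t) / real t) \<longlonglongrightarrow> Max ((\<lambda>k. - network_KL k) ` ?A)"
      unfolding S_def using rates by (intro ln_sum_exp_rate[OF A]) auto
    moreover have "Max ((\<lambda>k. - network_KL k) ` ?A) = - Min (network_KL ` ?A)"
      using A by (simp add: image_image)
    ultimately have ln_S: "(\<lambda>t. ln (S t) / real t) \<longlonglongrightarrow> - Min (network_KL ` ?A)"
      by simp
    have "Min (network_KL ` ?A) \<ge> 0"
      using A A_sub network_KL_nonneg by simp
    then have "(\<lambda>t. ln (1 + S t) / real t) \<longlonglongrightarrow> 0"
      by (intro ln_one_plus_rate[OF S_pos ln_S]) simp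
    from tendsto_diff[OF this ln_S]
    show "(\<lambda>t. - (1 / real t) * ln (1 - q t i M)) \<longlonglongrightarrow> Min (network_KL ` ?A)"
      unfolding error_eq by simp
  qed
qed

end

theorem corollary3:
  fixes P :: "'w measure"
    and lam :: "nat \<Rightarrow> 'x measure"
    and f :: "nat \<Rightarrow> nat \<Rightarrow> 'x \<Rightarrow> real"
    and X :: "nat \<Rightarrow> 'w \<Rightarrow> nat \<Rightarrow> 'x"
    and W :: "nat \<Rightarrow> nat \<Rightarrow> real"
    and q0 :: "nat \<Rightarrow> nat \<Rightarrow> real"
    and v :: "nat \<Rightarrow> real"
    and n M :: nat
  assumes n_pos: "n \<ge> 1" and M_ge2: "M \<ge> 2"
    and P: "prob_space P"
    and lam_sf: "\<And>i. i \<in> {1..n} \<Longrightarrow> sigma_finite_measure (lam i)"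
    and f_meas: "\<And>i k. i \<in> {1..n} \<Longrightarrow> k \<in> {1..M} \<Longrightarrow> f i k \<in> borel_measurable (lam i)"
    and f_pos: "\<And>i k x. i \<in> {1..n} \<Longrightarrow> k \<in> {1..M} \<Longrightarrow> x \<in> space (lam i) \<Longrightarrow> f i k x > 0"
    and f_prob: "\<And>i k. i \<in> {1..n} \<Longrightarrow> k \<in> {1..M} \<Longrightarrow>
                   prob_space (density (lam i) (\<lambda>x. ennreal (f i k x)))"
    and X_meas: "\<And>t i. t \<ge> 1 \<Longrightarrow> i \<in> {1..n} \<Longrightarrow> (\<lambda>\<omega>. X t \<omega> i) \<in> measurable P (lam i)"
    and X_indep: "prob_space.indep_vars P (\<lambda>_. PiM {1..n} lam)
                    (\<lambda>t \<omega>. \<lambda>i\<in>{1..n}. X t \<omega> i) {1..}"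
    and X_ident: "\<And>s t. s \<ge> 1 \<Longrightarrow> t \<ge> 1 \<Longrightarrow>
                    distr P (PiM {1..n} lam) (\<lambda>\<omega>. \<lambda>i\<in>{1..n}. X s \<omega> i)
                  = distr P (PiM {1..n} lam) (\<lambda>\<omega>. \<lambda>i\<in>{1..n}. X t \<omega> i)"
    and X_marg: "\<And>t i. t \<ge> 1 \<Longrightarrow> i \<in> {1..n} \<Longrightarrow>
                    distr P (lam i) (\<lambda>\<omega>. X t \<omega> i) = density (lam i) (\<lambda>x. ennreal (f i M x))"
    and W_nonneg: "\<And>i j. i \<in> {1..n} \<Longrightarrow> j \<in> {1..n} \<Longrightarrow> W i j \<ge> 0"
    and W_stoch: "\<And>i. i \<in> {1..n} \<Longrightarrow> (\<Sum>j\<in>{1..n}. W i j) = 1"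
    and q0_pos: "\<And>i k. i \<in> {1..n} \<Longrightarrow> k \<in> {1..M} \<Longrightarrow> q0 i k > 0"
    and q0_sum: "\<And>i. i \<in> {1..n} \<Longrightarrow> (\<Sum>k\<in>{1..M}. q0 i k) = 1"
    and v_nonneg: "\<And>i. i \<in> {1..n} \<Longrightarrow> v i \<ge> 0"
    and v_sum: "(\<Sum>i\<in>{1..n}. v i) = 1"
    and v_stat: "\<And>j. j \<in> {1..n} \<Longrightarrow> (\<Sum>i\<in>{1..n}. v i * W i j) = v j"
    and A1: "\<And>k j. k \<in> {1..M} \<Longrightarrow> j \<in> {1..M} \<Longrightarrow> k \<noteq> j \<Longrightarrow>
               \<exists>i\<in>{1..n}. KLnode lam f i k j > 0"
    and A2: "strongly_connected W n"
    and A4: "\<exists>L>0. \<forall>i\<in>{1..n}. \<forall>j\<in>{1..M}. \<forall>k\<in>{1..M}. \<forall>x\<in>space (lam i).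
               \<bar>ln (f i j x / f i k x)\<bar> \<le> L"
  shows "\<forall>i\<in>{1..n}. AE \<omega> in P.
           liminf (\<lambda>t. ereal (- (1 / real t) * ln (1 - belief W n M f q0 (\<lambda>s. X s \<omega>) t i M)))
           = ereal (Min ((\<lambda>k. \<Sum>j\<in>{1..n}. v j * KLnode lam f j M k) ` {1..M-1}))"
proof (intro ballI)
  fix i assume i: "i \<in> {1..n}"
  obtain L where ln_ratio_bound: "\<And>i j k x. i \<in> {1..n} \<Longrightarrow> j \<in> {1..M} \<Longrightarrow> k \<in> {1..M} \<Longrightarrow>
      x \<in> space (lam i) \<Longrightarrow> \<bar>ln (f i j x / f i k x)\<bar> \<le> L"
    using A4 by blast
  interpret social_learning W n P lam f X q0 v M L
    by (intro social_learning.intro row_stochastic.intro social_learning_axioms.intro P)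
       (fact assms ln_ratio_bound)+
  show "AE \<omega> in P.
      liminf (\<lambda>t. ereal (- (1 / real t) * ln (1 - belief W n M f q0 (\<lambda>s. X s \<omega>) t i M)))
      = ereal (Min ((\<lambda>k. \<Sum>j\<in>{1..n}. v j * KLnode lam f j M k) ` {1..M-1}))"
    using belief_error_rate[OF i] unfolding network_KL_def
    by (rule eventually_mono) (auto intro!: lim_imp_Liminf tendsto_ereal)
qed

end
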